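(* Let $n\ge4$, let $\textnormal{Reg}(\mathcal{OCT}_n)$ be the set of regular elements of $\mathcal{OCT}_n$ and $L(n,n-1)=\{\alpha\in\textnormal{Reg}(\mathcal{OCT}_n):|\textnormal{Im}\,\alpha|\le n-1\}$. Then the rank of the semigroup $L(n,n-1)$ is $2$.
   Context: $\mathcal{T}_n$ is the full transformation semigroup on $[n]=\{1,\dots,n\}$ under composition. $\alpha$ is a contraction if $|x\alpha-y\alpha|\le|x-y|$ for all $x,y$, order-preserving if $x\le y\Rightarrow x\alpha\le y\alpha$. $\mathcal{OCT}_n$ is the semigroup of order-preserving contractions; $\alpha\in\mathcal{OCT}_n$ is regular if $\alpha\beta\alpha=\alpha$ for some $\beta\in\mathcal{OCT}_n$. The rank of a semigroup is the minimum cardinality of a generating set. *)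

theory Defs
  imports Main
begin

text \<open>Full transformations of [n] = {1..n}, represented as functions nat => nat
  that map {1..n} into itself and are the identity outside {1..n} (so that each
  transformation has a unique representative).\<close>
definition Tn :: "nat \<Rightarrow> (nat \<Rightarrow> nat) set" where
  "Tn n = {f. f ` {1..n} \<subseteq> {1..n} \<and> (\<forall>x. x \<notin> {1..n} \<longrightarrow> f x = x)}"

text \<open>Semigroup product with maps written on the right: x(ab) = (xa)b.\<close>
definition tmult :: "(nat \<Rightarrow> nat) \<Rightarrow> (nat \<Rightarrow> nat) \<Rightarrow> (nat \<Rightarrow> nat)" where
  "tmult a b = b \<circ> a"

definition order_preserving :: "nat \<Rightarrow> (nat \<Rightarrow> nat) \<Rightarrow> bool" where
  "order_preserving n f \<longleftrightarrow> (\<forall>x\<in>{1..n}. \<forall>y\<in>{1..n}. x \<le> y \<longrightarrow> f x \<le> f y)"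

definition contraction :: "nat \<Rightarrow> (nat \<Rightarrow> nat) \<Rightarrow> bool" where
  "contraction n f \<longleftrightarrow> (\<forall>x\<in>{1..n}. \<forall>y\<in>{1..n}.
      \<bar>int (f x) - int (f y)\<bar> \<le> \<bar>int x - int y\<bar>)"

definition OCT :: "nat \<Rightarrow> (nat \<Rightarrow> nat) set" where
  "OCT n = {f \<in> Tn n. order_preserving n f \<and> contraction n f}"

definition RegOCT :: "nat \<Rightarrow> (nat \<Rightarrow> nat) set" where
  "RegOCT n = {a \<in> OCT n. \<exists>b \<in> OCT n. tmult (tmult a b) a = a}"

definition Lnn1 :: "nat \<Rightarrow> (nat \<Rightarrow> nat) set" where
  "Lnn1 n = {a \<in> RegOCT n. card (a ` {1..n}) \<le> n - 1}"

inductive_set sgen :: "(nat \<Rightarrow> nat) set \<Rightarrow> (nat \<Rightarrow> nat) set" for A where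
  base: "a \<in> A \<Longrightarrow> a \<in> sgen A"
| mult: "a \<in> sgen A \<Longrightarrow> b \<in> sgen A \<Longrightarrow> tmult a b \<in> sgen A"

definition srank :: "(nat \<Rightarrow> nat) set \<Rightarrow> nat" where
  "srank S = (LEAST k. \<exists>A. A \<subseteq> S \<and> finite A \<and> card A = k \<and> sgen A = S)"

end

theory Submission
  imports Defs
begin

(* A regular element a = a b a of OCT_n is a "ramp": constant up to some p, then rising with
   slope one for k steps, then constant.  Indeed the image of a is an interval on which b is a
   right inverse of a; two consecutive points of that interval have distinct b-values, so the
   contraction b is a translation there, and a undoes it.  Ramps with k <= n - 2 (image of size
   at most n - 1) are closed under composition, and each is a product of the two shifts
   x |-> max 1 (x - 1) and x |-> min n (x + 1).  One generator g never suffices: g fixes 1, or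
   fixes n, or maps {2..n-1} into itself, and everything g generates inherits this, whereas the
   products of the two shifts in either order and the downward shift itself violate it. *)

lemma OCT_maps_into: "a \<in> OCT n \<Longrightarrow> x \<in> {1..n} \<Longrightarrow> a x \<in> {1..n}"
  by (auto simp: OCT_def Tn_def image_subset_iff)

lemma OCT_fixes_outside: "a \<in> OCT n \<Longrightarrow> x \<notin> {1..n} \<Longrightarrow> a x = x"
  by (auto simp: OCT_def Tn_def)

lemma OCT_mono: "a \<in> OCT n \<Longrightarrow> 1 \<le> x \<Longrightarrow> x \<le> y \<Longrightarrow> y \<le> n \<Longrightarrow> a x \<le> a y"
  by (auto simp: OCT_def order_preserving_def)

lemma OCT_abs_diff_Suc_le:
  assumes "a \<in> OCT n" "1 \<le> x" "x < n"
  shows "\<bar>int (a (Suc x)) - int (a x)\<bar> \<le> 1"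
proof -
  have "contraction n a" and "Suc x \<in> {1..n}" "x \<in> {1..n}"
    using assms by (auto simp: OCT_def)
  then show ?thesis
    unfolding contraction_def by fastforce
qed

lemma OCT_image:
  assumes "a \<in> OCT n" "1 \<le> n"
  shows "a ` {1..n} = {a 1..a n}"
proof
  show "a ` {1..n} \<subseteq> {a 1..a n}"
    using OCT_mono[OF assms(1)] by auto
  show "{a 1..a n} \<subseteq> a ` {1..n}"
  proof
    fix y assume "y \<in> {a 1..a n}"
    then obtain x where "1 \<le> x" "x \<le> n" "int (a x) = int y"
      using nat_intermed_int_val[of 1 n "\<lambda>x. int (a x)" "int y"]
        OCT_abs_diff_Suc_le[OF assms(1)] assms(2)
      by auto
    then show "y \<in> a ` {1..n}"
      by force
  qed
qed

lemma OCT_right_inverse_translation: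
  assumes "b \<in> OCT n" "1 \<le> lo" "hi \<le> n" "\<And>y. y \<in> {lo..hi} \<Longrightarrow> a (b y) = y" "j \<le> hi - lo"
  shows "b (lo + j) = b lo + j"
  using assms(5)
proof (induction j)
  case (Suc j)
  let ?y = "lo + j"
  have "b ?y \<noteq> b (Suc ?y)"
    using assms(4)[of ?y] assms(4)[of "Suc ?y"] Suc.prems by force
  moreover have "b ?y \<le> b (Suc ?y)"
    using OCT_mono[OF assms(1)] assms(2,3) Suc.prems by simp
  moreover have "\<bar>int (b (Suc ?y)) - int (b ?y)\<bar> \<le> 1"
    using OCT_abs_diff_Suc_le[OF assms(1)] assms(2,3) Suc.prems by simp
  ultimately show ?case
    using Suc by simp
qed simp

(* Truncated subtraction makes x - p vanish for x \<le> p: the ramp is constant c on [1,p], rises by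
   one per step on [p,p+k] and is constant c + k from p + k on. *)
definition ramp :: "nat \<Rightarrow> nat \<Rightarrow> nat \<Rightarrow> nat \<Rightarrow> nat \<Rightarrow> nat" where
  "ramp n p k c x = (if x \<in> {1..n} then c + min (x - p) k else x)"

definition ramp_params :: "nat \<Rightarrow> nat \<Rightarrow> nat \<Rightarrow> nat \<Rightarrow> bool" where
  "ramp_params n p k c \<longleftrightarrow> 1 \<le> p \<and> p + k \<le> n \<and> 1 \<le> c \<and> c + k \<le> n"

lemma ramp_apply [simp]: "x \<in> {1..n} \<Longrightarrow> ramp n p k c x = c + min (x - p) k"
  by (simp add: ramp_def)

lemma ramp_outside [simp]: "x \<notin> {1..n} \<Longrightarrow> ramp n p k c x = x"
  unfolding ramp_def by auto

lemma ramp_image: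
  assumes "ramp_params n p k c"
  shows "ramp n p k c ` {1..n} = {c..c + k}"
proof
  show "ramp n p k c ` {1..n} \<subseteq> {c..c + k}"
    by auto
  show "{c..c + k} \<subseteq> ramp n p k c ` {1..n}"
  proof
    fix y assume "y \<in> {c..c + k}"
    then have "y - c + p \<in> {1..n}" "ramp n p k c (y - c + p) = y"
      using assms by (auto simp: ramp_params_def ramp_def)
    then show "y \<in> ramp n p k c ` {1..n}"
      by (metis image_eqI)
  qed
qed

lemma ramp_in_OCT:
  assumes "ramp_params n p k c"
  shows "ramp n p k c \<in> OCT n"
  using assms
  by (auto simp: OCT_def Tn_def order_preserving_def contraction_def ramp_params_def min_def)

lemma ramp_regular:
  assumes "ramp_params n p k c"
  shows "tmult (tmult (ramp n p k c) (ramp n c k p)) (ramp n p k c) = ramp n p k c"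
proof
  fix x
  show "tmult (tmult (ramp n p k c) (ramp n c k p)) (ramp n p k c) x = ramp n p k c x"
    by (cases "x \<in> {1..n}") (use assms in \<open>auto simp: tmult_def ramp_params_def\<close>)
qed

lemma OCT_eq_ramp:
  assumes a: "a \<in> OCT n" and "p \<in> {1..n}" "p + k \<in> {1..n}"
    and image: "a ` {1..n} = {c..c + k}" and on_window: "\<And>j. j \<le> k \<Longrightarrow> a (p + j) = c + j"
  shows "a = ramp n p k c"
proof -
  have "a x = c + min (x - p) k" if x: "x \<in> {1..n}" for x
  proof -
    have ax: "a x \<in> {c..c + k}"
      using image x by blast
    consider "x \<le> p" | "p < x" "x \<le> p + k" | "p + k < x"
      by linarith
    then show ?thesis
    proof cases
      case 1
      then show ?thesis
        using OCT_mono[OF a, of x p] on_window[of 0] ax x \<open>p \<in> {1..n}\<close> by simp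
    next
      case 2
      then show ?thesis
        using on_window[of "x - p"] by simp
    next
      case 3
      then show ?thesis
        using OCT_mono[OF a, of "p + k" x] on_window[of k] ax x \<open>p + k \<in> {1..n}\<close> by simp
    qed
  qed
  then show ?thesis
    using OCT_fixes_outside[OF a] by (auto simp: fun_eq_iff ramp_def)
qed

lemma regular_OCT_eq_ramp:
  assumes a: "a \<in> OCT n" and b: "b \<in> OCT n" and aba: "\<And>x. a (b (a x)) = a x" and "1 \<le> n"
  defines "p \<equiv> b (a 1)" and "k \<equiv> a n - a 1" and "c \<equiv> a 1"
  shows "ramp_params n p k c \<and> a = ramp n p k c"
proof -
  have image: "a ` {1..n} = {c..c + k}"
    using OCT_image[OF a \<open>1 \<le> n\<close>] OCT_mono[OF a, of 1 n] \<open>1 \<le> n\<close> by (simp add: c_def k_def)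
  have image_range: "{c..c + k} \<subseteq> {1..n}"
    unfolding image[symmetric] using OCT_maps_into[OF a] by (rule image_subsetI)
  have right_inverse: "a (b y) = y" if "y \<in> {c..c + k}" for y
    using that aba unfolding image[symmetric] by auto
  have b_shift: "b (c + j) = p + j" if "j \<le> k" for j
    using OCT_right_inverse_translation[OF b, of c "c + k" a j] image_range right_inverse that
    by (simp add: p_def c_def)
  have on_window: "a (p + j) = c + j" if "j \<le> k" for j
    using right_inverse[of "c + j"] b_shift[OF that] that by simp
  have "c \<in> {1..n}" "c + k \<in> {1..n}"
    using image_range by auto
  then have "p \<in> {1..n}" "p + k \<in> {1..n}"
    using OCT_maps_into[OF b, of c] OCT_maps_into[OF b, of "c + k"] b_shift[of 0] b_shift[of k]
    by simp_all
  then have "ramp_params n p k c"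
    using image_range by (auto simp: ramp_params_def)
  moreover have "a = ramp n p k c"
    using OCT_eq_ramp[OF a] \<open>p \<in> {1..n}\<close> \<open>p + k \<in> {1..n}\<close> image on_window by blast
  ultimately show ?thesis ..
qed

lemma RegOCT_eq_ramps:
  assumes "1 \<le> n"
  shows "RegOCT n = {ramp n p k c | p k c. ramp_params n p k c}"
proof
  show "RegOCT n \<subseteq> {ramp n p k c | p k c. ramp_params n p k c}"
  proof
    fix a assume "a \<in> RegOCT n"
    then obtain b where "a \<in> OCT n" "b \<in> OCT n" "tmult (tmult a b) a = a"
      by (auto simp: RegOCT_def)
    then have "a (b (a x)) = a x" for x
      by (metis comp_apply tmult_def)
    then show "a \<in> {ramp n p k c | p k c. ramp_params n p k c}"
      using regular_OCT_eq_ramp[OF \<open>a \<in> OCT n\<close> \<open>b \<in> OCT n\<close> _ assms] by blast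
  qed
  show "{ramp n p k c | p k c. ramp_params n p k c} \<subseteq> RegOCT n"
  proof clarify
    fix p k c assume params: "ramp_params n p k c"
    then have "ramp_params n c k p"
      by (auto simp: ramp_params_def)
    then show "ramp n p k c \<in> RegOCT n"
      unfolding RegOCT_def using ramp_in_OCT ramp_regular params by blast
  qed
qed

definition short_ramps :: "nat \<Rightarrow> (nat \<Rightarrow> nat) set" where
  "short_ramps n = {ramp n p k c | p k c. ramp_params n p k c \<and> k + 2 \<le> n}"

lemma Lnn1_eq_short_ramps:
  assumes "1 \<le> n"
  shows "Lnn1 n = short_ramps n"
proof -
  have short_iff: "card (ramp n p k c ` {1..n}) \<le> n - 1 \<longleftrightarrow> k + 2 \<le> n"
    if "ramp_params n p k c" for p k c
    using ramp_image[OF that] that by (auto simp: ramp_params_def)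
  show ?thesis
    unfolding Lnn1_def short_ramps_def RegOCT_eq_ramps[OF assms]
    using short_iff by blast
qed

lemma tmult_ramp_eqI:
  assumes "1 \<le> c" "c + k \<le> n"
    and "\<And>x. x \<in> {1..n} \<Longrightarrow> c' + min (c + min (x - p) k - p') k' = C + min (x - P) K"
  shows "tmult (ramp n p k c) (ramp n p' k' c') = ramp n P K C"
proof
  fix x
  show "tmult (ramp n p k c) (ramp n p' k' c') x = ramp n P K C x"
    by (cases "x \<in> {1..n}") (use assms in \<open>auto simp: tmult_def\<close>)
qed

(* The window of the product is where the image [c, c + k] of the first ramp meets the window
   [p', p' + k'] of the second. *)
lemma tmult_ramp:
  assumes "1 \<le> c" "c + k \<le> n" "max c p' \<le> min (c + k) (p' + k')"
  shows "tmult (ramp n p k c) (ramp n p' k' c') =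
    ramp n (p + (max c p' - c)) (min (c + k) (p' + k') - max c p') (c' + (max c p' - p'))"
  by (rule tmult_ramp_eqI)
    (use assms in \<open>simp_all add: min_def max_def split: if_splits nat_diff_split\<close>)

lemma tmult_ramp_params:
  assumes "ramp_params n p k c" "ramp_params n p' k' c'"
  obtains P K C where "ramp_params n P K C" "K \<le> k"
    "tmult (ramp n p k c) (ramp n p' k' c') = ramp n P K C"
proof -
  consider "max c p' \<le> min (c + k) (p' + k')" | "c + k < p'" | "p' + k' < c"
    by linarith
  then show ?thesis
  proof cases
    case 1
    let ?P = "p + (max c p' - c)" and ?K = "min (c + k) (p' + k') - max c p'"
      and ?C = "c' + (max c p' - p')"
    have "ramp_params n ?P ?K ?C" "?K \<le> k"
      using assms 1 unfolding ramp_params_def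
      by (simp_all add: min_def max_def split: if_splits nat_diff_split)
    moreover have "tmult (ramp n p k c) (ramp n p' k' c') = ramp n ?P ?K ?C"
      by (rule tmult_ramp) (use assms 1 in \<open>simp_all add: ramp_params_def\<close>)
    ultimately show ?thesis
      by (rule that)
  next
    case 2
    have "tmult (ramp n p k c) (ramp n p' k' c') = ramp n 1 0 c'"
      by (rule tmult_ramp_eqI) (use assms 2 in \<open>simp_all add: ramp_params_def\<close>)
    then show ?thesis
      by (intro that[of 1 0 c']) (use assms in \<open>auto simp: ramp_params_def\<close>)
  next
    case 3
    have "tmult (ramp n p k c) (ramp n p' k' c') = ramp n 1 0 (c' + k')"
      by (rule tmult_ramp_eqI) (use assms 3 in \<open>simp_all add: ramp_params_def\<close>)
    then show ?thesis
      by (intro that[of 1 0 "c' + k'"]) (use assms in \<open>auto simp: ramp_params_def\<close>)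
  qed
qed

lemma short_ramps_tmult:
  assumes "a \<in> short_ramps n" "b \<in> short_ramps n"
  shows "tmult a b \<in> short_ramps n"
proof -
  obtain p k c p' k' c' where params: "ramp_params n p k c" "ramp_params n p' k' c'"
    and short: "k + 2 \<le> n" and ab: "a = ramp n p k c" "b = ramp n p' k' c'"
    using assms by (auto simp: short_ramps_def)
  obtain P K C where "ramp_params n P K C" "K \<le> k" "tmult a b = ramp n P K C"
    using tmult_ramp_params[OF params] unfolding ab by metis
  moreover from \<open>K \<le> k\<close> short have "K + 2 \<le> n"
    by simp
  ultimately show ?thesis
    unfolding short_ramps_def by blast
qed

definition shift_down :: "nat \<Rightarrow> nat \<Rightarrow> nat" where
  "shift_down n = ramp n 2 (n - 2) 1"

definition shift_up :: "nat \<Rightarrow> nat \<Rightarrow> nat" where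
  "shift_up n = ramp n 1 (n - 2) 2"

lemma shifts_in_short_ramps:
  assumes "2 \<le> n"
  shows "shift_down n \<in> short_ramps n" "shift_up n \<in> short_ramps n"
proof -
  have "ramp_params n 2 (n - 2) 1" "ramp_params n 1 (n - 2) 2" "n - 2 + 2 \<le> n"
    using assms by (auto simp: ramp_params_def)
  then show "shift_down n \<in> short_ramps n" "shift_up n \<in> short_ramps n"
    unfolding shift_down_def shift_up_def short_ramps_def by blast+
qed

lemma sgen_subset:
  assumes "A \<subseteq> S" "\<And>a b. a \<in> S \<Longrightarrow> b \<in> S \<Longrightarrow> tmult a b \<in> S"
  shows "sgen A \<subseteq> S"
proof
  fix f assume "f \<in> sgen A"
  then show "f \<in> S"
    by induction (use assms in auto)
qed

lemma sgen_shifts_subset_short_ramps: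
  assumes "2 \<le> n"
  shows "sgen {shift_down n, shift_up n} \<subseteq> short_ramps n"
  using shifts_in_short_ramps[OF assms] short_ramps_tmult by (intro sgen_subset) auto

lemma ramp_to_bottom_in_sgen:
  assumes "2 \<le> p" "p \<le> n"
  shows "ramp n p (n - p) 1 \<in> sgen {shift_down n, shift_up n}"
  using assms
proof (induction p rule: nat_induct_at_least)
  case base
  then show ?case
    by (simp add: shift_down_def sgen.base)
next
  case (Suc p)
  have "tmult (shift_down n) (ramp n p (n - p) 1) = ramp n (Suc p) (n - Suc p) 1"
    unfolding shift_down_def using Suc by (subst tmult_ramp) (auto simp: max_def)
  then show ?case
    using Suc by (metis Suc_leD insertI1 sgen.base sgen.mult)
qed

lemma ramp_to_top_in_sgen:
  assumes "2 \<le> c" "c \<le> n"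
  shows "ramp n 1 (n - c) c \<in> sgen {shift_down n, shift_up n}"
  using assms
proof (induction c rule: nat_induct_at_least)
  case base
  then show ?case
    by (simp add: shift_up_def sgen.base)
next
  case (Suc c)
  have "tmult (shift_up n) (ramp n 1 (n - c) c) = ramp n 1 (n - Suc c) (Suc c)"
    unfolding shift_up_def using Suc by (subst tmult_ramp) auto
  then show ?case
    using Suc by (metis Suc_leD insertCI sgen.base sgen.mult)
qed

lemma ramp_shift_up_in_sgen:
  assumes "ramp n p k 1 \<in> sgen {shift_down n, shift_up n}" "1 \<le> c" "c + k \<le> n"
  shows "ramp n p k c \<in> sgen {shift_down n, shift_up n}"
  using assms(2,3)
proof (induction c rule: nat_induct_at_least)
  case base
  then show ?case
    using assms(1) by simp
next
  case (Suc c)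
  have "tmult (ramp n p k c) (shift_up n) = ramp n p k (Suc c)"
    unfolding shift_up_def using Suc by (subst tmult_ramp) (auto simp: max_def min_def)
  then show ?case
    using Suc by (metis Suc_leD add_Suc insertCI sgen.base sgen.mult)
qed

lemma short_ramps_subset_sgen_shifts:
  "short_ramps n \<subseteq> sgen {shift_down n, shift_up n}"
  unfolding short_ramps_def
proof clarify
  \<comment> \<open>ramp n p k c = shift down by p - 1, clamp at k + 1, shift up by c - 1; the clamp itself is
    shifting up and then down by n - k - 1.\<close>
  fix p k c assume params: "ramp_params n p k c" and short: "k + 2 \<le> n"
  let ?G = "sgen {shift_down n, shift_up n}"
  let ?q = "n - k"
  have "tmult (ramp n 1 k ?q) (ramp n ?q k 1) = ramp n 1 k 1"
    using short by (subst tmult_ramp) auto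
  moreover have "ramp n 1 k ?q \<in> ?G" "ramp n ?q k 1 \<in> ?G"
    using ramp_to_top_in_sgen[of ?q n] ramp_to_bottom_in_sgen[of ?q n] short by simp_all
  ultimately have clamp: "ramp n 1 k 1 \<in> ?G"
    by (metis sgen.mult)
  have "ramp n p k 1 \<in> ?G"
  proof (cases "p = 1")
    case False
    have "tmult (ramp n p (n - p) 1) (ramp n 1 k 1) = ramp n p k 1"
      using params False by (subst tmult_ramp) (auto simp: ramp_params_def min_absorb2)
    moreover have "ramp n p (n - p) 1 \<in> ?G"
      using ramp_to_bottom_in_sgen params False by (simp add: ramp_params_def)
    ultimately show ?thesis
      using clamp by (metis sgen.mult)
  qed (use clamp in simp)
  then show "ramp n p k c \<in> ?G"
    using ramp_shift_up_in_sgen params by (simp add: ramp_params_def)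
qed

lemma sgen_shifts_eq_Lnn1:
  assumes "2 \<le> n"
  shows "sgen {shift_down n, shift_up n} = Lnn1 n"
proof -
  have "Lnn1 n = short_ramps n"
    using assms by (intro Lnn1_eq_short_ramps) simp
  then show ?thesis
    using sgen_shifts_subset_short_ramps[OF assms] short_ramps_subset_sgen_shifts by blast
qed

lemma sgen_invariant:
  assumes "\<And>a. a \<in> A \<Longrightarrow> a ` X \<subseteq> X" "f \<in> sgen A"
  shows "f ` X \<subseteq> X"
  using assms(2)
proof induction
  case (mult a b)
  then show ?case
    by (auto simp: tmult_def image_subset_iff)
qed (use assms(1) in blast)

lemma OCT_invariant_sets:
  assumes "g \<in> OCT n" "1 \<le> n"
  shows "g ` {1} \<subseteq> {1} \<or> g ` {n} \<subseteq> {n} \<or> g ` {2..n - 1} \<subseteq> {2..n - 1}"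
proof (cases "g 1 = 1 \<or> g n = n")
  case False
  then have "2 \<le> g 1" "g n \<le> n - 1"
    using OCT_maps_into[OF assms(1), of 1] OCT_maps_into[OF assms(1), of n] assms(2) by auto
  moreover have "g 1 \<le> g x" "g x \<le> g n" if "x \<in> {2..n - 1}" for x
    using OCT_mono[OF assms(1), of 1 x] OCT_mono[OF assms(1), of x n] that by auto
  ultimately have "g x \<in> {2..n - 1}" if "x \<in> {2..n - 1}" for x
    using that by fastforce
  then show ?thesis
    by blast
qed auto

lemma sgen_singleton_ne_Lnn1:
  assumes "3 \<le> n" "g \<in> OCT n"
  shows "sgen {g} \<noteq> Lnn1 n"
proof
  assume gen: "sgen {g} = Lnn1 n"
  have invariant: "f ` X \<subseteq> X" if "g ` X \<subseteq> X" "f \<in> sgen {g}" for f X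
    using sgen_invariant[of "{g}" X f] that by blast
  have down: "shift_down n \<in> sgen {g}" and up: "shift_up n \<in> sgen {g}"
    using gen sgen_shifts_eq_Lnn1[of n] assms(1) by (auto intro: sgen.base)
  have shift_values: "tmult (shift_down n) (shift_up n) 1 = 2"
    "tmult (shift_up n) (shift_down n) n = n - 1" "shift_down n 2 = 1"
    using assms(1) by (simp_all add: tmult_def shift_down_def shift_up_def)
  consider "g ` {1} \<subseteq> {1}" | "g ` {n} \<subseteq> {n}" | "g ` {2..n - 1} \<subseteq> {2..n - 1}"
    using OCT_invariant_sets[OF assms(2)] assms(1) by fastforce
  then show False
  proof cases
    case 1
    then show False
      using invariant[OF 1 sgen.mult[OF down up]] shift_values(1) by simp
  next
    case 2
    then show False
      using invariant[OF 2 sgen.mult[OF up down]] shift_values(2) assms(1) by simp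
  next
    case 3
    have "2 \<in> {2..n - 1}"
      using assms(1) by simp
    then have "shift_down n 2 \<in> {2..n - 1}"
      using invariant[OF 3 down] by blast
    then show False
      using shift_values(3) by simp
  qed
qed

lemma Lnn1_generating_set_card:
  assumes "3 \<le> n" "B \<subseteq> Lnn1 n" "finite B" "sgen B = Lnn1 n"
  shows "2 \<le> card B"
proof (rule ccontr)
  assume "\<not> 2 \<le> card B"
  then consider "card B = 0" | "card B = 1"
    by linarith
  then show False
  proof cases
    case 1
    then have "sgen B = {}"
      using assms(3) sgen_subset[of B "{}"] by auto
    then show False
      using assms(1,4) sgen_shifts_eq_Lnn1[of n] by (auto intro: sgen.base)
  next
    case 2
    then obtain g where "B = {g}"
      by (rule card_1_singletonE)
    moreover have "g \<in> OCT n"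
      using assms(2) \<open>B = {g}\<close> by (auto simp: Lnn1_def RegOCT_def)
    ultimately show False
      using sgen_singleton_ne_Lnn1 assms(1,4) by blast
  qed
qed

lemma srank_eqI:
  assumes "A \<subseteq> S" "finite A" "sgen A = S"
    and "\<And>B. B \<subseteq> S \<Longrightarrow> finite B \<Longrightarrow> sgen B = S \<Longrightarrow> card A \<le> card B"
  shows "srank S = card A"
  unfolding srank_def by (rule Least_equality) (use assms in auto)

theorem corollary12:
  fixes n :: nat
  assumes "n \<ge> 4"
  shows "srank (Lnn1 n) = 2"
proof -
  let ?A = "{shift_down n, shift_up n}"
  have "shift_down n 1 \<noteq> shift_up n 1"
    using assms by (simp add: shift_down_def shift_up_def)
  then have "card ?A = 2"
    by (metis card_2_iff)
  moreover have "sgen ?A = Lnn1 n"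
    using sgen_shifts_eq_Lnn1 assms by simp
  ultimately show ?thesis
    using srank_eqI[of ?A "Lnn1 n"] Lnn1_generating_set_card[of n] assms by (auto intro: sgen.base)
qed

end
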